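(* Let $\mathbb G=V_1\times V_2$ be a step-two Carnot group. Then $\mathcal A_h(\mathbb G)=\mathcal A(V_1\times V_2)$ if and only if the following holds: whenever $b:V_1\times V_2\to\mathbb R$ is bilinear and $b(x,[x,x'])=0$ for all $x,x'\in V_1$, then $b=0$.
   Context: A step-two Carnot group is $\mathbb G=V_1\times V_2$, where $V_1,V_2$ are finite-dimensional real vector spaces with $V_2\neq\{0\}$, equipped with a bilinear skew-symmetric map $[\cdot,\cdot]:V_1\times V_1\to V_2$ with $\operatorname{span}\{[x,x']:x,x'\in V_1\}=V_2$, and group law $(x,z)\cdot(x',z')=(x+x',z+z'+[x,x'])$. $\mathcal A_h(\mathbb G)$ is the space of $h$-affine maps $f:\mathbb G\to\mathbb R$, i.e. such that for all $(x,z)\in\mathbb G$, $y\in V_1$, $t\in\mathbb R\mapsto f((x,z)\cdot(ty,0))$ is affine; $\mathcal A(V_1\times V_2)$ is the space of maps that are affine in the usual sense on the vector space $V_1\times V_2$. *)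

theory Defs
  imports "HOL-Analysis.Analysis"
begin

text \<open>A step-two Carnot group structure on V1 x V2: V1, V2 finite-dimensional real
  vector spaces (modelled as euclidean_space types, hence V2 nonzero automatically),
  br the bracket V1 x V1 -> V2.\<close>
definition step_two_carnot :: "('a::euclidean_space \<Rightarrow> 'a \<Rightarrow> 'b::euclidean_space) \<Rightarrow> bool" where
  "step_two_carnot br \<longleftrightarrow> bilinear br \<and> (\<forall>x y. br x y = - br y x)
     \<and> span {br x y | x y. True} = UNIV"

definition carnot_mult :: "('a::real_vector \<Rightarrow> 'a \<Rightarrow> 'b::real_vector) \<Rightarrow> 'a \<times> 'b \<Rightarrow> 'a \<times> 'b \<Rightarrow> 'a \<times> 'b" where
  "carnot_mult br p q = (fst p + fst q, snd p + snd q + br (fst p) (fst q))"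

definition affine_real_fun :: "(real \<Rightarrow> real) \<Rightarrow> bool" where
  "affine_real_fun g \<longleftrightarrow> (\<exists>a c. \<forall>t. g t = a * t + c)"

definition h_affine :: "('a::real_vector \<Rightarrow> 'a \<Rightarrow> 'b::real_vector) \<Rightarrow> ('a \<times> 'b \<Rightarrow> real) \<Rightarrow> bool" where
  "h_affine br f \<longleftrightarrow> (\<forall>p y. affine_real_fun (\<lambda>t. f (carnot_mult br p (t *\<^sub>R y, 0))))"

definition affine_map :: "('v::real_vector \<Rightarrow> real) \<Rightarrow> bool" where
  "affine_map f \<longleftrightarrow> (\<exists>L c. linear L \<and> (\<forall>p. f p = L p + c))"

end

theory Submission
  imports Defs
begin

text \<open>
  An h-affine map \<open>g\<close> is affine along every vertical direction \<open>(0, [u, v])\<close>: averaging the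
  horizontal lines through \<open>(u, 0)\<close> and \<open>(-u, 0)\<close> produces the vertical line through the
  origin.  As finitely many brackets span \<open>V\<^sub>2\<close>, \<open>g\<close> is a polynomial in the vertical
  variable.  Under the bracket condition its top vertical differences are bilinear forms
  \<open>b(x, z)\<close> with \<open>b(x, [x, x']) = 0\<close>, hence vanish, so \<open>g\<close> has vertical degree at most one:
  \<open>g(x, z) = \<alpha>(x) + \<mu>(z) + b(x, z)\<close> with \<open>\<mu>\<close> linear and \<open>b\<close> bilinear.  Comparing \<open>g\<close> on the
  horizontal lines at scales 1 and 2 gives \<open>b(y, [x, y]) = 0\<close>, so \<open>b = 0\<close> and \<open>g\<close> is affine.
  Conversely, for \<open>b\<close> as in the condition, \<open>(x, z) \<mapsto> b(x, z)\<close> is h-affine and homogeneous of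
  degree two, so it is affine only if \<open>b = 0\<close>.
\<close>

section \<open>Affine functions on lines\<close>

lemma affine_real_fun_eq:
  assumes "affine_real_fun g"
  shows "g t = g 0 + t * (g 1 - g 0)"
  using assms unfolding affine_real_fun_def by (auto simp: algebra_simps)

lemma affine_real_fun_linear: "affine_real_fun (\<lambda>t. a * t + c)"
  unfolding affine_real_fun_def by blast

lemma affine_real_fun_lincomb:
  assumes "affine_real_fun f" "affine_real_fun g"
  shows "affine_real_fun (\<lambda>t. k * f t + l * g t)"
proof -
  obtain a c a' c' where "\<And>t. f t = a * t + c" "\<And>t. g t = a' * t + c'"
    using assms unfolding affine_real_fun_def by blast
  then show ?thesis
    unfolding affine_real_fun_def
    by (intro exI[of _ "k * a + l * a'"] exI[of _ "k * c + l * c'"]) (simp add: algebra_simps)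
qed

lemma affine_real_fun_add:
  "affine_real_fun f \<Longrightarrow> affine_real_fun g \<Longrightarrow> affine_real_fun (\<lambda>t. f t + g t)"
  using affine_real_fun_lincomb[of f g 1 1] by simp

lemma affine_real_fun_diff:
  "affine_real_fun f \<Longrightarrow> affine_real_fun g \<Longrightarrow> affine_real_fun (\<lambda>t. f t - g t)"
  using affine_real_fun_lincomb[of f g 1 "-1"] by simp

lemma linear_if_affine_on_lines:
  fixes \<phi> :: "'v::real_vector \<Rightarrow> real"
  assumes lines: "\<And>p v. affine_real_fun (\<lambda>t. \<phi> (p + t *\<^sub>R v))"
  shows "linear (\<lambda>p. \<phi> p - \<phi> 0)"
proof -
  have scale: "\<phi> (t *\<^sub>R v) - \<phi> 0 = t * (\<phi> v - \<phi> 0)" for t v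
    using affine_real_fun_eq[OF lines[of 0 v], of t] by simp
  have midpoint: "\<phi> ((1/2) *\<^sub>R (p + q)) = \<phi> p + (1/2) * (\<phi> q - \<phi> p)" for p q
  proof -
    have "p + (1/2) *\<^sub>R (q - p) = (1/2) *\<^sub>R (p + q)"
      by (simp add: algebra_simps flip: scaleR_add_left)
    then show ?thesis
      using affine_real_fun_eq[OF lines[of p "q - p"], of "1/2"] by simp
  qed
  have "\<phi> (p + q) - \<phi> 0 = (\<phi> p - \<phi> 0) + (\<phi> q - \<phi> 0)" for p q
    using scale[of "1/2" "p + q"] midpoint[of p q] by (simp add: field_simps)
  then show ?thesis
    by (intro linearI) (simp_all add: scale)
qed

lemma affine_map_if_affine_on_lines:
  fixes \<phi> :: "'v::real_vector \<Rightarrow> real"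
  assumes "\<And>p v. affine_real_fun (\<lambda>t. \<phi> (p + t *\<^sub>R v))"
  shows "affine_map \<phi>"
  unfolding affine_map_def
  by (intro exI[of _ "\<lambda>p. \<phi> p - \<phi> 0"] exI[of _ "\<phi> 0"]) (simp add: linear_if_affine_on_lines[OF assms])

section \<open>Finite differences and polynomial degree\<close>

definition fdiff :: "'v::real_vector \<Rightarrow> ('v \<Rightarrow> real) \<Rightarrow> 'v \<Rightarrow> real" where
  "fdiff d h p = h (p + d) - h p"

definition affine_along :: "'v::real_vector \<Rightarrow> ('v \<Rightarrow> real) \<Rightarrow> bool" where
  "affine_along w h \<longleftrightarrow> (\<forall>p. affine_real_fun (\<lambda>s. h (p + s *\<^sub>R w)))"

text \<open>\<open>poly_along S n h\<close>: all differences of order \<open>n + 1\<close> with steps in \<open>S\<close> vanish,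
  i.e. \<open>h\<close> is a polynomial of degree at most \<open>n\<close> in the directions of \<open>S\<close>.\<close>
fun poly_along :: "'v::real_vector set \<Rightarrow> nat \<Rightarrow> ('v \<Rightarrow> real) \<Rightarrow> bool" where
  "poly_along S 0 h \<longleftrightarrow> (\<forall>d\<in>S. \<forall>p. h (p + d) = h p)"
| "poly_along S (Suc n) h \<longleftrightarrow> (\<forall>d\<in>S. poly_along S n (fdiff d h))"

lemma fdiff_commute: "fdiff a (fdiff b h) = fdiff b (fdiff a h)"
  by (rule ext) (simp add: fdiff_def algebra_simps)

lemma fdiff_add_step: "fdiff (a + b) h p = fdiff a h p + fdiff b h p + fdiff b (fdiff a h) p"
  by (simp add: fdiff_def algebra_simps)

lemma fdiff_add: "fdiff d (\<lambda>p. f p + g p) = (\<lambda>p. fdiff d f p + fdiff d g p)"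
  by (rule ext) (simp add: fdiff_def)

lemma fdiff_cmult: "fdiff d (\<lambda>p. c * f p) = (\<lambda>p. c * fdiff d f p)"
  by (rule ext) (simp add: fdiff_def algebra_simps)

lemma poly_along_add: "poly_along S n f \<Longrightarrow> poly_along S n g \<Longrightarrow> poly_along S n (\<lambda>p. f p + g p)"
  by (induction n arbitrary: f g) (auto simp: fdiff_add)

lemma poly_along_cmult: "poly_along S n f \<Longrightarrow> poly_along S n (\<lambda>p. c * f p)"
  by (induction n arbitrary: f) (auto simp: fdiff_cmult)

lemma poly_along_0_fdiff: "poly_along S 0 h \<Longrightarrow> d \<in> S \<Longrightarrow> fdiff d h p = 0"
  by (simp add: fdiff_def)

lemma poly_along_fdiff: "poly_along S n h \<Longrightarrow> poly_along S n (fdiff e h)"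
proof (induction n arbitrary: h)
  case 0
  have "h (p + d + e) = h (p + e)" "h (p + d) = h p" if "d \<in> S" for p d
    using 0 that by (simp_all add: add_ac)
  then show ?case by (simp add: fdiff_def)
next
  case (Suc n)
  then show ?case by (simp add: fdiff_commute[of _ e])
qed

lemma poly_along_Suc: "poly_along S n h \<Longrightarrow> poly_along S (Suc n) h"
proof (induction n arbitrary: h)
  case 0
  then show ?case by (simp add: fdiff_def)
next
  case (Suc n)
  then show ?case by simp
qed

lemma affine_along_fdiff:
  assumes "affine_along w h"
  shows "affine_along w (fdiff d h)"
  unfolding affine_along_def fdiff_def
proof
  fix p
  have "affine_real_fun (\<lambda>s. h ((p + d) + s *\<^sub>R w) - h (p + s *\<^sub>R w))"
    using assms unfolding affine_along_def by (intro affine_real_fun_diff) auto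
  then show "affine_real_fun (\<lambda>s. h (p + s *\<^sub>R w + d) - h (p + s *\<^sub>R w))"
    by (simp add: add_ac)
qed

lemma affine_along_eq: "affine_along w h \<Longrightarrow> h (p + s *\<^sub>R w) = h p + s * fdiff w h p"
  unfolding affine_along_def fdiff_def
  using affine_real_fun_eq[of "\<lambda>s. h (p + s *\<^sub>R w)" s] by auto

lemma affine_along_fdiff_scaleR: "affine_along w h \<Longrightarrow> fdiff (c *\<^sub>R w) h p = c * fdiff w h p"
  using affine_along_eq[of w h p c] by (simp add: fdiff_def)

lemma affine_along_fdiff_invariant:
  assumes "affine_along w h"
  shows "fdiff w h (p + s *\<^sub>R w) = fdiff w h p"
proof -
  have "p + s *\<^sub>R w + w = p + (s + 1) *\<^sub>R w"
    by (simp add: algebra_simps)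
  then show ?thesis
    using affine_along_eq[OF assms, of p "s + 1"] affine_along_eq[OF assms, of p s]
    by (simp add: fdiff_def algebra_simps)
qed

lemma poly_along_1_iff: "poly_along S 1 h \<longleftrightarrow> (\<forall>d\<in>S. \<forall>e\<in>S. \<forall>p. fdiff e (fdiff d h) p = 0)"
  by (simp add: fdiff_def)

lemma poly_along_2_fdiff:
  "poly_along S 2 h \<Longrightarrow> d \<in> S \<Longrightarrow> e \<in> S \<Longrightarrow> f \<in> S \<Longrightarrow> fdiff f (fdiff e (fdiff d h)) p = 0"
  by (simp add: numeral_2_eq_2 fdiff_def)

lemma poly_along_extend_invariant:
  assumes "\<And>p c. h (p + c *\<^sub>R w) = h p" "poly_along S n h"
  shows "poly_along {u + c *\<^sub>R w | u c. u \<in> S} n h"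
  using assms
proof (induction n arbitrary: h)
  case 0
  have "h (p + (u + c *\<^sub>R w)) = h p" if "u \<in> S" for p u c
    using "0.prems" that by (metis add.assoc add.commute poly_along.simps(1))
  then show ?case by auto
next
  case (Suc n)
  have "poly_along {u + c *\<^sub>R w | u c. u \<in> S} n (fdiff (u + c *\<^sub>R w) h)" if "u \<in> S" for u c
  proof -
    have "fdiff (u + c *\<^sub>R w) h p = fdiff u h p" for p
      using Suc.prems(1) unfolding fdiff_def by (metis add.assoc)
    moreover have "fdiff u h (p + c *\<^sub>R w) = fdiff u h p" for p c
    proof -
      have "p + c *\<^sub>R w + u = (p + u) + c *\<^sub>R w" by (simp add: add_ac)
      then show ?thesis unfolding fdiff_def by (simp only: Suc.prems(1))
    qed
    ultimately show ?thesis
      using Suc.IH Suc.prems(2) that by simp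
  qed
  then show ?case by auto
qed

lemma fdiff_add_scaleR_step:
  assumes "affine_along w h"
  shows "fdiff (u + c *\<^sub>R w) h = (\<lambda>p. fdiff u h p + c * (fdiff w h p + fdiff u (fdiff w h) p))"
proof
  fix p
  have "h (p + (u + c *\<^sub>R w)) = h (p + u) + c * fdiff w h (p + u)"
    using affine_along_eq[OF assms, of "p + u" c] by (simp add: add.assoc)
  then show "fdiff (u + c *\<^sub>R w) h p = fdiff u h p + c * (fdiff w h p + fdiff u (fdiff w h) p)"
    by (simp add: fdiff_def algebra_simps)
qed

lemma poly_along_insert_direction:
  assumes "affine_along w h" "poly_along S n h"
  shows "poly_along {u + c *\<^sub>R w | u c. u \<in> S} (Suc n) h"
  using assms
proof (induction n arbitrary: h)
  case 0
  let ?T = "{u + c *\<^sub>R w | u c. u \<in> S}"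
  have wT: "poly_along ?T 0 (fdiff w h)"
    using affine_along_fdiff_invariant[OF "0.prems"(1)] poly_along_fdiff[OF "0.prems"(2)]
    by (rule poly_along_extend_invariant)
  have "fdiff (u + c *\<^sub>R w) h = (\<lambda>p. c * fdiff w h p)" if "u \<in> S" for u c
    using fdiff_add_scaleR_step[OF "0.prems"(1), of u c] that
      poly_along_0_fdiff[OF "0.prems"(2)] poly_along_0_fdiff[OF poly_along_fdiff[OF "0.prems"(2)]]
    by simp
  then have "poly_along ?T 0 (fdiff (u + c *\<^sub>R w) h)" if "u \<in> S" for u c
    using poly_along_cmult[OF wT] that by simp
  then show ?case by (simp only: poly_along.simps(2)) blast
next
  case (Suc n)
  let ?T = "{u + c *\<^sub>R w | u c. u \<in> S}"
  have "poly_along ?T (Suc n) (fdiff w h)"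
    using affine_along_fdiff_invariant[OF Suc.prems(1)] poly_along_fdiff[OF Suc.prems(2)]
    by (rule poly_along_extend_invariant)
  moreover have "poly_along ?T (Suc n) (fdiff u h)" if "u \<in> S" for u
    using Suc.IH[OF affine_along_fdiff[OF Suc.prems(1)]] Suc.prems(2) that by simp
  moreover have "poly_along ?T (Suc n) (fdiff u (fdiff w h))" if "u \<in> S" for u
    using Suc.IH[OF affine_along_fdiff[OF affine_along_fdiff[OF Suc.prems(1)]]]
      poly_along_fdiff[OF Suc.prems(2), of w] that by simp
  ultimately have "poly_along ?T (Suc n) (fdiff (u + c *\<^sub>R w) h)" if "u \<in> S" for u c
    using fdiff_add_scaleR_step[OF Suc.prems(1), of u c] that
    by (simp only:) (intro poly_along_add poly_along_cmult)
  then show ?case by (simp only: poly_along.simps(2)) blast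
qed

lemma span_insert_eq: "span (insert w S) = {u + c *\<^sub>R w | u c. u \<in> span S}"
  unfolding span_insert by (auto; metis add_diff_cancel diff_add_cancel)

lemma poly_along_span:
  assumes "finite B" "\<forall>w\<in>B. affine_along w h"
  shows "poly_along (span B) (card B) h"
  using assms
proof (induction B rule: finite_induct)
  case empty
  then show ?case by simp
next
  case (insert w B)
  then show ?case
    using poly_along_insert_direction[of w h "span B" "card B"] by (simp add: span_insert_eq)
qed

lemma linear_if_additive_homogeneous_on_spanning:
  fixes A :: "'v::real_vector \<Rightarrow> real"
  assumes span: "span S = UNIV"
    and add: "\<And>a b. A (a + b) = A a + A b"
    and scale: "\<And>c w. w \<in> S \<Longrightarrow> A (c *\<^sub>R w) = c * A w"
  shows "linear A"
proof -
  have "\<forall>c. A (c *\<^sub>R z) = c * A z" for z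
  proof -
    have "z \<in> span S" using span by simp
    then show ?thesis
    proof (induction rule: span_induct_alt)
      case base
      show ?case using add[of 0 0] by simp
    next
      case (step k w y)
      then show ?case
        by (simp add: add scale scaleR_add_right algebra_simps)
    qed
  qed
  then show ?thesis by (intro linearI) (simp_all add: add)
qed

lemma linear_if_affine_along_linear_image:
  fixes \<phi> :: "'u::real_vector \<Rightarrow> 'v::real_vector"
  assumes "linear \<phi>" "\<And>a. affine_along (\<phi> a) g"
  shows "linear (\<lambda>x. g (q + \<phi> x) - g q)"
proof -
  have "affine_real_fun (\<lambda>t. g (q + \<phi> (a + t *\<^sub>R a')))" for a a'
  proof -
    have "affine_real_fun (\<lambda>t. g ((q + \<phi> a) + t *\<^sub>R \<phi> a'))"
      using assms(2)[of a'] unfolding affine_along_def by blast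
    then show ?thesis
      by (simp add: linear_add[OF assms(1)] linear_scale[OF assms(1)] add.assoc)
  qed
  then show ?thesis
    using linear_if_affine_on_lines[of "\<lambda>x. g (q + \<phi> x)"] by (simp add: linear_0[OF assms(1)])
qed

lemma linear_Pair_0: "linear (Pair 0 :: 'b \<Rightarrow> 'a::real_vector \<times> 'b::real_vector)"
  by (intro linearI) simp_all

section \<open>Step-two Carnot groups\<close>

definition bracket_nondegenerate :: "('a::real_vector \<Rightarrow> 'a \<Rightarrow> 'b::real_vector) \<Rightarrow> bool" where
  "bracket_nondegenerate br \<longleftrightarrow>
     (\<forall>b :: 'a \<Rightarrow> 'b \<Rightarrow> real. bilinear b \<and> (\<forall>x x'. b x (br x x') = 0) \<longrightarrow> (\<forall>x z. b x z = 0))"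

lemma carnot_mult_assoc:
  assumes "bilinear br"
  shows "carnot_mult br (carnot_mult br p q) r = carnot_mult br p (carnot_mult br q r)"
  by (simp add: carnot_mult_def bilinear_ladd[OF assms] bilinear_radd[OF assms] algebra_simps)

lemma carnot_mult_vertical_left:
  assumes "bilinear br"
  shows "carnot_mult br (0, d) p = p + (0, d)"
  by (simp add: carnot_mult_def bilinear_lzero[OF assms] prod_eq_iff add.commute)

lemma carnot_mult_vertical_right:
  assumes "bilinear br"
  shows "carnot_mult br p (0, d) = p + (0, d)"
  by (simp add: carnot_mult_def bilinear_rzero[OF assms] prod_eq_iff)

lemma carnot_mult_horizontal:
  assumes "bilinear br"
  shows "carnot_mult br p (t *\<^sub>R y, 0) = p + t *\<^sub>R (y, br (fst p) y)"
  by (simp add: carnot_mult_def bilinear_rmul[OF assms] prod_eq_iff)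

lemma h_affine_left_translate:
  assumes "bilinear br" "h_affine br g"
  shows "h_affine br (\<lambda>p. g (carnot_mult br q p))"
  unfolding h_affine_def
proof (intro allI)
  fix p y
  have "affine_real_fun (\<lambda>t. g (carnot_mult br (carnot_mult br q p) (t *\<^sub>R y, 0)))"
    using assms(2) unfolding h_affine_def by blast
  then show "affine_real_fun (\<lambda>t. g (carnot_mult br q (carnot_mult br p (t *\<^sub>R y, 0))))"
    by (simp add: carnot_mult_assoc[OF assms(1)])
qed

lemma h_affine_fdiff_vertical:
  assumes "bilinear br" "h_affine br g"
  shows "h_affine br (fdiff (0, d) g)"
proof -
  have "fdiff (0, d) g = (\<lambda>p. g (carnot_mult br (0, d) p) - g p)"
    by (simp add: fun_eq_iff fdiff_def carnot_mult_vertical_left[OF assms(1)])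
  then show ?thesis
    using h_affine_left_translate[OF assms] assms(2) unfolding h_affine_def
    by (simp add: affine_real_fun_diff)
qed

lemma h_affine_horizontal_line:
  assumes "bilinear br" "h_affine br g"
  shows "affine_real_fun (\<lambda>t. g (x + t *\<^sub>R y, z + t *\<^sub>R br x y))"
proof -
  have "affine_real_fun (\<lambda>t. g (carnot_mult br (x, z) (t *\<^sub>R y, 0)))"
    using assms(2) unfolding h_affine_def by blast
  then show ?thesis
    by (simp add: carnot_mult_horizontal[OF assms(1)])
qed

lemma h_affine_vertical_midpoint:
  assumes "bilinear br" "h_affine br g"
  shows "g (0, z) = (g (x, z) + g (- x, z)) / 2"
  using affine_real_fun_eq[OF h_affine_horizontal_line[OF assms, of 0 x z], of "-1"]
  by (simp add: bilinear_lzero[OF assms(1)])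

lemma h_affine_bracket_line_0:
  assumes "bilinear br" "h_affine br g"
  shows "affine_real_fun (\<lambda>s. g (0, s *\<^sub>R br u v))"
proof -
  have "affine_real_fun (\<lambda>s. (1/2) * g (u + s *\<^sub>R v, 0 + s *\<^sub>R br u v)
                          + (1/2) * g (- u + s *\<^sub>R (- v), 0 + s *\<^sub>R br (- u) (- v)))"
    by (intro affine_real_fun_lincomb h_affine_horizontal_line[OF assms])
  moreover have "g (0, s *\<^sub>R br u v) = (1/2) * g (u + s *\<^sub>R v, 0 + s *\<^sub>R br u v)
                          + (1/2) * g (- u + s *\<^sub>R (- v), 0 + s *\<^sub>R br (- u) (- v))" for s
    using h_affine_vertical_midpoint[OF assms, of "s *\<^sub>R br u v" "u + s *\<^sub>R v"]
    by (simp add: bilinear_lneg[OF assms(1)] bilinear_rneg[OF assms(1)])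
  ultimately show ?thesis by (simp only:)
qed

lemma h_affine_affine_along_bracket:
  assumes "bilinear br" "h_affine br g"
  shows "affine_along (0, br u v) g"
  unfolding affine_along_def
proof
  fix p
  show "affine_real_fun (\<lambda>s. g (p + s *\<^sub>R (0, br u v)))"
    using h_affine_bracket_line_0[OF assms(1) h_affine_left_translate[OF assms],
        where u = u and v = v]
    by (simp add: carnot_mult_vertical_right[OF assms(1)])
qed

lemma affine_map_imp_h_affine:
  assumes "bilinear br" "affine_map g"
  shows "h_affine br g"
proof -
  obtain L c where "linear L" "\<And>p. g p = L p + c"
    using assms(2) unfolding affine_map_def by blast
  then have "g (p + t *\<^sub>R v) = L v * t + (L p + c)" for p v t
    by (simp add: linear_add linear_scale)
  then have "affine_real_fun (\<lambda>t. g (p + t *\<^sub>R v))" for p v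
    by (simp add: affine_real_fun_linear)
  then show ?thesis
    unfolding h_affine_def carnot_mult_horizontal[OF assms(1)] by blast
qed

lemma bilinear_annihilating_brackets_h_affine:
  assumes "bilinear br" "\<And>x y. br x y = - br y x"
    and "bilinear b" "\<And>x x'. b x (br x x') = 0"
  shows "h_affine br (\<lambda>p. b (fst p) (snd p))"
  unfolding h_affine_def
proof (intro allI)
  fix p :: "'a \<times> 'b" and y
  have "b y (br (fst p) y) = 0"
    using assms(2)[of "fst p" y] assms(4) bilinear_rneg[OF assms(3)] by simp
  then have "b (fst p + t *\<^sub>R y) (snd p + t *\<^sub>R br (fst p) y) = b y (snd p) * t + b (fst p) (snd p)"
    for t
    by (simp add: bilinear_ladd[OF assms(3)] bilinear_radd[OF assms(3)] bilinear_lmul[OF assms(3)]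
        bilinear_rmul[OF assms(3)] assms(4))
  then show "affine_real_fun
      (\<lambda>t. b (fst (carnot_mult br p (t *\<^sub>R y, 0))) (snd (carnot_mult br p (t *\<^sub>R y, 0))))"
    by (simp add: carnot_mult_horizontal[OF assms(1)] affine_real_fun_linear)
qed

lemma affine_map_bilinear_eq_0:
  assumes "bilinear b" "affine_map (\<lambda>p. b (fst p) (snd p))"
  shows "b x z = 0"
proof -
  obtain L c where L: "linear L" "\<And>p. b (fst p) (snd p) = L p + c"
    using assms(2) unfolding affine_map_def by blast
  have "c = 0"
    using L(2)[of 0] bilinear_lzero[OF assms(1)] linear_0[OF L(1)] by simp
  then have "b (2 *\<^sub>R x) (2 *\<^sub>R z) = 2 * b x z"
    using L(2)[of "2 *\<^sub>R (x, z)"] L(2)[of "(x, z)"] linear_scale[OF L(1), of 2 "(x, z)"] by simp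
  then show ?thesis
    by (simp add: bilinear_lmul[OF assms(1)] bilinear_rmul[OF assms(1)])
qed

section \<open>Vertical degree of h-affine maps\<close>

lemma h_affine_vertical_fdiff_linear:
  assumes "bilinear br" "span {br x y | x y. True} = UNIV" "h_affine br h"
    and "\<And>a c p. fdiff (0, a) (fdiff (0, c) h) p = 0"
  shows "linear (\<lambda>z. fdiff (0, z) h p)"
proof (rule linear_if_additive_homogeneous_on_spanning[OF assms(2)])
  show "fdiff (0, a + c) h p = fdiff (0, a) h p + fdiff (0, c) h p" for a c
    using fdiff_add_step[of "(0, a)" "(0, c)" h p] assms(4) by simp
  show "fdiff (0, c *\<^sub>R w) h p = c * fdiff (0, w) h p" if w: "w \<in> {br x y | x y. True}" for c w
  proof -
    obtain u v where "w = br u v" using w by blast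
    moreover have "affine_along (0, br u v) h"
      by (rule h_affine_affine_along_bracket[OF assms(1,3)])
    ultimately show ?thesis
      using affine_along_fdiff_scaleR[of "(0, br u v)" h c p] by simp
  qed
qed

lemma h_affine_vertical_bracket_linear:
  assumes "bilinear br" "h_affine br g"
  shows "linear (\<lambda>x. g (q + (0, br x y)) - g q)" and "linear (\<lambda>y. g (q + (0, br x y)) - g q)"
proof -
  have "linear (\<lambda>x. (0 :: 'a, br x y))" "linear (\<lambda>y. (0 :: 'a, br x y))"
    by (auto intro!: linearI simp: bilinear_ladd[OF assms(1)] bilinear_radd[OF assms(1)]
        bilinear_lmul[OF assms(1)] bilinear_rmul[OF assms(1)])
  then show "linear (\<lambda>x. g (q + (0, br x y)) - g q)" "linear (\<lambda>y. g (q + (0, br x y)) - g q)"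
    by (auto intro!: linear_if_affine_along_linear_image h_affine_affine_along_bracket[OF assms])
qed

lemma vertical_second_fdiff_bracket_eq_0:
  assumes bl: "bilinear br" and sp: "span {br x y | x y. True} = UNIV"
    and nd: "bracket_nondegenerate br" and H: "h_affine br g"
    and P: "poly_along (range (Pair 0)) 2 g"
  shows "fdiff (0, z) (fdiff (0, br x y) g) p = 0"
proof -
  define b where "b x z = fdiff (0, z) (fdiff (0, br x y) g) p" for x z
  have third: "fdiff (0, a) (fdiff (0, c) (fdiff (0, d) g)) q = 0" for a c d q
    using poly_along_2_fdiff[OF P] by simp
  have "linear (b x)" for x
    unfolding b_def
    by (rule h_affine_vertical_fdiff_linear[OF bl sp h_affine_fdiff_vertical[OF bl H] third])
  moreover have "linear (\<lambda>x. b x z)" for z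
  proof -
    have "b x z = (g (p + (0, z) + (0, br x y)) - g (p + (0, z))) - (g (p + (0, br x y)) - g p)"
      for x
      by (simp add: b_def fdiff_def add_ac)
    then show ?thesis
      by (simp only:) (intro linear_compose_sub h_affine_vertical_bracket_linear[OF bl H])
  qed
  ultimately have "bilinear b"
    by (simp add: bilinear_def)
  moreover have "b x (br x x') = 0" for x x'
  proof -
    have "b x (br x x') = (g (p + (0, br x (x' + y))) - g p) - (g (p + (0, br x x')) - g p)
                          - (g (p + (0, br x y)) - g p)"
      by (simp add: b_def fdiff_def bilinear_radd[OF bl] add_ac)
    then show ?thesis
      using linear_add[OF h_affine_vertical_bracket_linear(2)[OF bl H], of p x x' y] by simp
  qed
  ultimately show ?thesis
    using nd unfolding bracket_nondegenerate_def b_def by blast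
qed

lemma vertical_degree_2_imp_1:
  assumes bl: "bilinear br" and sp: "span {br x y | x y. True} = UNIV"
    and nd: "bracket_nondegenerate br" and H: "h_affine br g"
    and P: "poly_along (range (Pair 0)) 2 g"
  shows "poly_along (range (Pair 0)) 1 g"
proof -
  have "fdiff (0, z) (fdiff (0, e) g) p = 0" for z e p
  proof -
    let ?A = "\<lambda>e. fdiff (0, z) (fdiff (0, e) g) p"
    have "linear ?A"
    proof (rule linear_if_additive_homogeneous_on_spanning[OF sp])
      show "?A (a + c) = ?A a + ?A c" for a c
      proof -
        have "fdiff (0, a + c) g
              = (\<lambda>q. fdiff (0, a) g q + fdiff (0, c) g q + fdiff (0, c) (fdiff (0, a) g) q)"
          using fdiff_add_step[of "(0, a)" "(0, c)" g] by (simp add: fun_eq_iff)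
        then show ?thesis
          using poly_along_2_fdiff[OF P] by (simp add: fdiff_add)
      qed
      show "?A (c *\<^sub>R w) = c * ?A w" if "w \<in> {br x y | x y. True}" for c w
        using that vertical_second_fdiff_bracket_eq_0[OF bl sp nd H P, where p = p]
        by (auto simp flip: bilinear_lmul[OF bl])
    qed
    then show ?thesis
      using linear_eq_0_on_span[of ?A "{br x y | x y. True}" e] sp
        vertical_second_fdiff_bracket_eq_0[OF bl sp nd H P, where p = p] by auto
  qed
  then show ?thesis
    unfolding poly_along_1_iff by auto
qed

lemma vertical_degree_le_1:
  assumes bl: "bilinear br" and sp: "span {br x y | x y. True} = UNIV"
    and nd: "bracket_nondegenerate br"
  shows "h_affine br g \<Longrightarrow> poly_along (range (Pair 0)) n g \<Longrightarrow> poly_along (range (Pair 0)) 1 g"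
proof (induction n arbitrary: g)
  case 0
  then show ?case using poly_along_Suc[OF "0.prems"(2)] by (simp only: One_nat_def)
next
  case (Suc n)
  have "poly_along (range (Pair 0)) 1 (fdiff (0, z) g)" for z
    using Suc.IH[OF h_affine_fdiff_vertical[OF bl Suc.prems(1)]] Suc.prems(2) by simp
  then have "poly_along (range (Pair 0)) 2 g"
    by (auto simp: numeral_2_eq_2)
  then show ?case
    by (rule vertical_degree_2_imp_1[OF bl sp nd Suc.prems(1)])
qed

lemma h_affine_vertically_polynomial:
  fixes br :: "'a::real_vector \<Rightarrow> 'a \<Rightarrow> 'b::euclidean_space"
  assumes bl: "bilinear br" and sp: "span {br x y | x y. True} = UNIV" and H: "h_affine br g"
  shows "\<exists>n. poly_along (range (Pair 0)) n g"
proof -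
  obtain B where B: "B \<subseteq> {br x y | x y. True}" "independent B" "{br x y | x y. True} \<subseteq> span B"
    by (rule maximal_independent_subset)
  have "span B = UNIV"
    using span_mono[OF B(3)] unfolding sp span_span by auto
  then have "span (Pair 0 ` B) = range (Pair 0 :: 'b \<Rightarrow> 'a \<times> 'b)"
    by (simp add: linear_span_image[OF linear_Pair_0])
  moreover have "finite B"
    using independent_bound[OF B(2)] by blast
  moreover have "\<forall>w\<in>Pair 0 ` B. affine_along w g"
    using B(1) h_affine_affine_along_bracket[OF bl H] by auto
  ultimately show ?thesis
    using poly_along_span[of "Pair 0 ` B" g] by auto
qed

lemma h_affine_vertically_affine_decomp:
  assumes bl: "bilinear br" and sp: "span {br x y | x y. True} = UNIV" and H: "h_affine br g"
    and P: "poly_along (range (Pair 0)) 1 g"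
  obtains \<mu> b where "linear \<mu>" "bilinear b" "\<And>x z. g (x, z) = g (x, 0) + \<mu> z + b x z"
proof -
  have second: "fdiff (0, a) (fdiff (0, c) g) p = 0" for a c p
    using P unfolding poly_along_1_iff by blast
  have lin_z: "linear (\<lambda>z. fdiff (0, z) g (x, 0))" for x
    by (rule h_affine_vertical_fdiff_linear[OF bl sp H second])
  have lin_x: "linear (\<lambda>x. fdiff (0, z) g (x, 0) - fdiff (0, z) g (0, 0))" for z
  proof -
    have "affine_real_fun (\<lambda>t. fdiff (0, z) g (x + t *\<^sub>R y, 0))" for x y
    proof -
      have "fdiff (0, z) g (x + t *\<^sub>R y, t *\<^sub>R br x y) = fdiff (0, z) g (x + t *\<^sub>R y, 0)" for t
        using second[of "t *\<^sub>R br x y" z "(x + t *\<^sub>R y, 0)"] by (simp add: fdiff_def[of "(0, _)"])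
      then show ?thesis
        using h_affine_horizontal_line[OF bl h_affine_fdiff_vertical[OF bl H], of z x y 0] by simp
    qed
    then show ?thesis
      using linear_if_affine_on_lines[of "\<lambda>x. fdiff (0, z) g (x, 0)"] by simp
  qed
  show thesis
  proof (rule that)
    show "linear (\<lambda>z. fdiff (0, z) g (0, 0))"
      by (rule lin_z)
    show "bilinear (\<lambda>x z. fdiff (0, z) g (x, 0) - fdiff (0, z) g (0, 0))"
      unfolding bilinear_def by (intro conjI allI linear_compose_sub lin_z lin_x)
    show "g (x, z)
        = g (x, 0) + fdiff (0, z) g (0, 0) + (fdiff (0, z) g (x, 0) - fdiff (0, z) g (0, 0))"
      for x z
      by (simp add: fdiff_def)
  qed
qed

text \<open>On the horizontal line through \<open>(x, 0)\<close> in direction \<open>y\<close>, the second difference of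
  \<open>\<alpha> = g(\<cdot>, 0)\<close> equals \<open>-2 b(y, [x, y])\<close>.  Replacing \<open>x, y\<close> by \<open>2x, 2y\<close> doubles the former,
  since \<open>\<alpha>\<close> is affine on lines through 0, but multiplies the latter by 8.\<close>
lemma h_affine_decomp_bracket_eq_0:
  assumes bl: "bilinear br" and H: "h_affine br g" and \<mu>: "linear \<mu>" and b: "bilinear b"
    and g: "\<And>x z. g (x, z) = g (x, 0) + \<mu> z + b x z"
  shows "b y (br x y) = 0"
proof -
  define \<alpha> where "\<alpha> x = g (x, 0)" for x
  have second_diff: "\<alpha> (x + y) + \<alpha> (x - y) - 2 * \<alpha> x = - 2 * b y (br x y)" for x y
  proof -
    have "g (x + y, br x y) + g (x - y, - br x y) = 2 * g (x, 0)"
      using affine_real_fun_eq[OF h_affine_horizontal_line[OF bl H, of x y 0], of "-1"] by simp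
    then show ?thesis
      using g[of "x + y" "br x y"] g[of "x - y" "- br x y"] linear_neg[OF \<mu>]
      by (simp add: \<alpha>_def bilinear_ladd[OF b] bilinear_lsub[OF b] bilinear_rneg[OF b])
  qed
  have double: "\<alpha> (2 *\<^sub>R v) = 2 * \<alpha> v - \<alpha> 0" for v
    using affine_real_fun_eq[OF h_affine_horizontal_line[OF bl H, of 0 v 0], of 2]
    by (simp add: \<alpha>_def bilinear_lzero[OF bl])
  have "\<alpha> (2 *\<^sub>R x + 2 *\<^sub>R y) + \<alpha> (2 *\<^sub>R x - 2 *\<^sub>R y) - 2 * \<alpha> (2 *\<^sub>R x)
        = 2 * (\<alpha> (x + y) + \<alpha> (x - y) - 2 * \<alpha> x)"
    using double[of "x + y"] double[of "x - y"] double[of x]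
    by (simp add: scaleR_add_right scaleR_diff_right)
  moreover have "b (2 *\<^sub>R y) (br (2 *\<^sub>R x) (2 *\<^sub>R y)) = 8 * b y (br x y)"
    by (simp add: bilinear_lmul[OF bl] bilinear_rmul[OF bl] bilinear_lmul[OF b] bilinear_rmul[OF b])
  ultimately show ?thesis
    using second_diff[of x y] second_diff[of "2 *\<^sub>R x" "2 *\<^sub>R y"] by simp
qed

lemma h_affine_imp_affine_map:
  fixes br :: "'a::real_vector \<Rightarrow> 'a \<Rightarrow> 'b::euclidean_space"
  assumes bl: "bilinear br" and skew: "\<And>x y. br x y = - br y x"
    and sp: "span {br x y | x y. True} = UNIV" and nd: "bracket_nondegenerate br"
    and H: "h_affine br g"
  shows "affine_map g"
proof -
  obtain n where "poly_along (range (Pair 0)) n g"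
    using h_affine_vertically_polynomial[OF bl sp H] by blast
  then have "poly_along (range (Pair 0)) 1 g"
    by (rule vertical_degree_le_1[OF bl sp nd H])
  then obtain \<mu> b where \<mu>: "linear \<mu>" and b: "bilinear b"
    and g: "\<And>x z. g (x, z) = g (x, 0) + \<mu> z + b x z"
    using h_affine_vertically_affine_decomp[OF bl sp H] by blast
  have "b x (br x x') = 0" for x x'
    using h_affine_decomp_bracket_eq_0[OF bl H \<mu> b g, where x = x' and y = x]
      skew[of x x'] bilinear_rneg[OF b] by simp
  then have "b x z = 0" for x z
    using nd b unfolding bracket_nondegenerate_def by blast
  then have g_split: "g p = g (fst p, 0) + \<mu> (snd p)" for p
    using g[of "fst p" "snd p"] by simp
  have horizontal: "affine_real_fun (\<lambda>t. g (x + t *\<^sub>R y, 0))" for x y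
  proof -
    have "affine_real_fun (\<lambda>t. g (x + t *\<^sub>R y, 0 + t *\<^sub>R br x y) - (\<mu> (br x y) * t + 0))"
      by (intro affine_real_fun_diff h_affine_horizontal_line[OF bl H] affine_real_fun_linear)
    moreover have "g (x + t *\<^sub>R y, t *\<^sub>R br x y) = g (x + t *\<^sub>R y, 0) + \<mu> (br x y) * t" for t
      using g_split[of "(x + t *\<^sub>R y, t *\<^sub>R br x y)"] linear_scale[OF \<mu>] by simp
    ultimately show ?thesis
      by simp
  qed
  have "affine_real_fun (\<lambda>t. g (p + t *\<^sub>R v))" for p v
  proof -
    have "g (p + t *\<^sub>R v) = g (fst p + t *\<^sub>R fst v, 0) + (\<mu> (snd v) * t + \<mu> (snd p))" for t
      using g_split[of "p + t *\<^sub>R v"] linear_add[OF \<mu>] linear_scale[OF \<mu>] by simp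
    then show ?thesis
      using affine_real_fun_add[OF horizontal affine_real_fun_linear] by simp
  qed
  then show ?thesis
    by (rule affine_map_if_affine_on_lines)
qed

lemma bracket_nondegenerate_if_h_affine_eq_affine:
  fixes br :: "'a::real_vector \<Rightarrow> 'a \<Rightarrow> 'b::real_vector"
  assumes bl: "bilinear br" and skew: "\<And>x y. br x y = - br y x"
    and eq: "{f :: 'a \<times> 'b \<Rightarrow> real. h_affine br f} = {f. affine_map f}"
  shows "bracket_nondegenerate br"
  unfolding bracket_nondegenerate_def
proof (intro allI impI)
  fix b :: "'a \<Rightarrow> 'b \<Rightarrow> real" and x z
  assume b: "bilinear b \<and> (\<forall>x x'. b x (br x x') = 0)"
  then have "h_affine br (\<lambda>p. b (fst p) (snd p))"
    by (intro bilinear_annihilating_brackets_h_affine[OF bl skew]) auto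
  then have "affine_map (\<lambda>p. b (fst p) (snd p))"
    using eq by blast
  then show "b x z = 0"
    using affine_map_bilinear_eq_0 b by blast
qed

theorem theorem5p12:
  fixes br :: "'a::euclidean_space \<Rightarrow> 'a \<Rightarrow> 'b::euclidean_space"
  assumes "step_two_carnot br"
  shows "{f :: 'a \<times> 'b \<Rightarrow> real. h_affine br f} = {f. affine_map f}
    \<longleftrightarrow> (\<forall>b :: 'a \<Rightarrow> 'b \<Rightarrow> real. bilinear b \<and> (\<forall>x x'. b x (br x x') = 0)
           \<longrightarrow> (\<forall>x z. b x z = 0))"
proof -
  have bl: "bilinear br" and skew: "\<And>x y. br x y = - br y x"
    and sp: "span {br x y | x y. True} = UNIV"
    using assms unfolding step_two_carnot_def by blast+
  have "{f :: 'a \<times> 'b \<Rightarrow> real. h_affine br f} = {f. affine_map f} \<longleftrightarrow> bracket_nondegenerate br"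
    using bracket_nondegenerate_if_h_affine_eq_affine[OF bl skew]
      h_affine_imp_affine_map[OF bl skew sp] affine_map_imp_h_affine[OF bl]
    by blast
  then show ?thesis
    unfolding bracket_nondegenerate_def .
qed

end
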